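(* If two trees $T$ and $T'$ have the same subdivision of $[0,1]$ into leaf intervals, then $T'$ can be obtained from $T$ by a finite sequence of basic moves.
   Context: Let $\tau=(\sqrt5-1)/2$, so $\tau^2+\tau=1$. A tree is a finite rooted binary tree whose carets (non-leaf vertex with its two children) are each labelled $x$-type or $y$-type. Vertices correspond to subintervals of $[0,1]$: the root to $[0,1]$; if a vertex corresponds to $[p,p+\tau^k]$, an $x$-type caret there gives children $[p,p+\tau^{k+2}]$ (left) and $[p+\tau^{k+2},p+\tau^k]$ (right), and a $y$-type caret gives $[p,p+\tau^{k+1}]$ (left) and $[p+\tau^{k+1},p+\tau^k]$ (right). The subdivision of a tree is the decomposition of $[0,1]$ into the intervals of its leaves. A basic move replaces, at some vertex of a tree, an $x$-type caret whose right child carries an $x$-type caret by a $y$-type caret whose left child carries a $y$-type caret (keeping the three subtrees hanging below, in the same left-to-right order), or performs the reverse replacement. *)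

theory Defs
  imports Complex_Main
begin

definition tau :: real where "tau = (sqrt 5 - 1) / 2"

datatype ftree = Leaf | XC ftree ftree | YC ftree ftree

text \<open>Leaf intervals of a tree whose root corresponds to [p, p + tau^k],
  given as pairs (left endpoint, right endpoint).\<close>
fun leaf_intervals :: "ftree \<Rightarrow> real \<Rightarrow> nat \<Rightarrow> (real \<times> real) set" where
  "leaf_intervals Leaf p k = {(p, p + tau ^ k)}"
| "leaf_intervals (XC l r) p k =
     leaf_intervals l p (k + 2) \<union> leaf_intervals r (p + tau ^ (k + 2)) (k + 1)"
| "leaf_intervals (YC l r) p k =
     leaf_intervals l p (k + 1) \<union> leaf_intervals r (p + tau ^ (k + 1)) (k + 2)"

definition subdivision :: "ftree \<Rightarrow> (real \<times> real) set" where
  "subdivision T = leaf_intervals T 0 0"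

inductive basic_move :: "ftree \<Rightarrow> ftree \<Rightarrow> bool" where
  xy: "basic_move (XC A (XC B C)) (YC (YC A B) C)"
| yx: "basic_move (YC (YC A B) C) (XC A (XC B C))"
| XL: "basic_move l l' \<Longrightarrow> basic_move (XC l r) (XC l' r)"
| XR: "basic_move r r' \<Longrightarrow> basic_move (XC l r) (XC l r')"
| YL: "basic_move l l' \<Longrightarrow> basic_move (YC l r) (YC l' r)"
| YR: "basic_move r r' \<Longrightarrow> basic_move (YC l r) (YC l r')"

end

theory Submission
  imports Defs
begin

text \<open>Basic moves preserve the subdivision, and below a root caret of given type the
  subdivision determines the subdivisions of the two subtrees. So, by induction on \<open>T'\<close>, it
  suffices to move \<open>T\<close> to a tree whose root caret has the type of that of \<open>T'\<close>. On the root
  interval \<open>[p, p + tau^k]\<close> the split point of that caret (\<open>p + tau^(k+2)\<close> for an x-caret,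
  \<open>p + tau^(k+1)\<close> for a y-caret) is a left endpoint of a leaf of \<open>T\<close>, and this alone allows the
  rotation: if \<open>T = XC l r\<close> and \<open>p + tau^(k+1)\<close> is such an endpoint, it lies in \<open>r\<close>, where it is the
  x-split point; recursively \<open>r\<close> moves to some \<open>XC B C\<close>, and the basic move
  \<open>XC l (XC B C) \<rightarrow> YC (YC l B) C\<close> finishes.\<close>

lemma tau_pos: "tau > 0"
  unfolding tau_def by (simp add: real_less_rsqrt)

lemma tau_power_pos: "tau ^ n > 0"
  using tau_pos by simp

lemma tau_square_add_tau: "tau\<^sup>2 + tau = 1"
  unfolding tau_def by (simp add: power2_eq_square field_simps)

lemma tau_less_1: "tau < 1"
proof -
  have "tau\<^sup>2 > 0"
    using tau_pos by simp
  with tau_square_add_tau show ?thesis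
    by linarith
qed

lemma tau_power_recurrence: "tau ^ (k + 2) + tau ^ (k + 1) = tau ^ k"
proof -
  have "tau ^ k * (tau\<^sup>2 + tau) = tau ^ k"
    by (simp add: tau_square_add_tau)
  then show ?thesis
    by (simp add: algebra_simps power_add power2_eq_square)
qed

lemma tau_power_less: "tau ^ (k + 2) < tau ^ (k + 1)"
  by (rule power_strict_decreasing) (simp_all add: tau_pos tau_less_1)

lemma leaf_interval_start_bounds:
  "(a, b) \<in> leaf_intervals t p k \<Longrightarrow> p \<le> a \<and> a < p + tau ^ k"
proof (induction t arbitrary: p k)
  case Leaf
  then show ?case using tau_power_pos[of k] by simp
next
  case (XC l r)
  from XC.prems consider
      (left) "(a, b) \<in> leaf_intervals l p (k + 2)"
    | (right) "(a, b) \<in> leaf_intervals r (p + tau ^ (k + 2)) (k + 1)"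
    by auto
  then show ?case
  proof cases
    case left
    with XC.IH(1) show ?thesis
      using tau_power_recurrence[of k] tau_power_pos[of "k + 1"] by fastforce
  next
    case right
    with XC.IH(2) show ?thesis
      using tau_power_recurrence[of k] tau_power_pos[of "k + 2"] by fastforce
  qed
next
  case (YC l r)
  from YC.prems consider
      (left) "(a, b) \<in> leaf_intervals l p (k + 1)"
    | (right) "(a, b) \<in> leaf_intervals r (p + tau ^ (k + 1)) (k + 2)"
    by auto
  then show ?case
  proof cases
    case left
    with YC.IH(1) show ?thesis
      using tau_power_recurrence[of k] tau_power_pos[of "k + 2"] by fastforce
  next
    case right
    with YC.IH(2) show ?thesis
      using tau_power_recurrence[of k] tau_power_pos[of "k + 1"] by fastforce
  qed
qed

lemma leaf_interval_at_start: "\<exists>b. (p, b) \<in> leaf_intervals t p k"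
  by (induction t arbitrary: p k) (simp_all, blast+)

lemma leaf_intervals_eq_Leaf_iff:
  "leaf_intervals t p k = leaf_intervals Leaf p k \<longleftrightarrow> t = Leaf"
proof
  assume eq: "leaf_intervals t p k = leaf_intervals Leaf p k"
  show "t = Leaf"
  proof (cases t)
    case (XC l r)
    obtain b where "(p + tau ^ (k + 2), b) \<in> leaf_intervals r (p + tau ^ (k + 2)) (k + 1)"
      using leaf_interval_at_start by blast
    then have "(p + tau ^ (k + 2), b) \<in> leaf_intervals t p k"
      using XC by simp
    then have "(p + tau ^ (k + 2), b) \<in> leaf_intervals Leaf p k"
      by (simp only: eq)
    then show ?thesis
      using tau_pos by simp
  next
    case (YC l r)
    obtain b where "(p + tau ^ (k + 1), b) \<in> leaf_intervals r (p + tau ^ (k + 1)) (k + 2)"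
      using leaf_interval_at_start by blast
    then have "(p + tau ^ (k + 1), b) \<in> leaf_intervals t p k"
      using YC by simp
    then have "(p + tau ^ (k + 1), b) \<in> leaf_intervals Leaf p k"
      by (simp only: eq)
    then show ?thesis
      using tau_pos by simp
  qed
qed simp

lemma Un_eq_Un_iff_if_separated:
  assumes "\<forall>x \<in> A \<union> A'. P x" and "\<forall>x \<in> B \<union> B'. \<not> P x"
  shows "A \<union> B = A' \<union> B' \<longleftrightarrow> A = A' \<and> B = B'"
  using assms by blast

lemma leaf_intervals_XC_eq_iff:
  "leaf_intervals (XC l r) p k = leaf_intervals (XC l' r') p k \<longleftrightarrow>
    leaf_intervals l p (k + 2) = leaf_intervals l' p (k + 2) \<and>
    leaf_intervals r (p + tau ^ (k + 2)) (k + 1) = leaf_intervals r' (p + tau ^ (k + 2)) (k + 1)"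
  unfolding leaf_intervals.simps
  by (rule Un_eq_Un_iff_if_separated[where P = "\<lambda>x. fst x < p + tau ^ (k + 2)"])
    (auto dest: leaf_interval_start_bounds)

lemma leaf_intervals_YC_eq_iff:
  "leaf_intervals (YC l r) p k = leaf_intervals (YC l' r') p k \<longleftrightarrow>
    leaf_intervals l p (k + 1) = leaf_intervals l' p (k + 1) \<and>
    leaf_intervals r (p + tau ^ (k + 1)) (k + 2) = leaf_intervals r' (p + tau ^ (k + 1)) (k + 2)"
  unfolding leaf_intervals.simps
  by (rule Un_eq_Un_iff_if_separated[where P = "\<lambda>x. fst x < p + tau ^ (k + 1)"])
    (auto dest: leaf_interval_start_bounds)

lemma leaf_intervals_rotation:
  "leaf_intervals (XC A (XC B C)) p k = leaf_intervals (YC (YC A B) C) p k"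
proof -
  have "p + tau ^ (k + 2) + tau ^ (k + 1 + 2) = p + tau ^ (k + 1)"
    using tau_power_recurrence[of "k + 1"] by simp
  moreover have "k + 1 + 1 = k + 2"
    by simp
  ultimately show ?thesis
    by (simp only: leaf_intervals.simps Un_assoc)
qed

lemma basic_move_leaf_intervals:
  "basic_move t t' \<Longrightarrow> leaf_intervals t p k = leaf_intervals t' p k"
proof (induction arbitrary: p k rule: basic_move.induct)
  case (xy A B C)
  show ?case by (rule leaf_intervals_rotation)
next
  case (yx A B C)
  show ?case by (rule leaf_intervals_rotation[symmetric])
qed simp_all

lemma basic_moves_leaf_intervals:
  "basic_move\<^sup>*\<^sup>* t t' \<Longrightarrow> leaf_intervals t p k = leaf_intervals t' p k"
  by (induction rule: rtranclp_induct) (simp_all add: basic_move_leaf_intervals)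

lemma basic_moves_XC:
  assumes "basic_move\<^sup>*\<^sup>* l l'" and "basic_move\<^sup>*\<^sup>* r r'"
  shows "basic_move\<^sup>*\<^sup>* (XC l r) (XC l' r')"
proof -
  have "basic_move\<^sup>*\<^sup>* (XC l r) (XC l' r)"
    using assms(1) by induction (auto intro: rtranclp.rtrancl_into_rtrancl basic_move.XL)
  also have "basic_move\<^sup>*\<^sup>* (XC l' r) (XC l' r')"
    using assms(2) by induction (auto intro: rtranclp.rtrancl_into_rtrancl basic_move.XR)
  finally show ?thesis .
qed

lemma basic_moves_YC:
  assumes "basic_move\<^sup>*\<^sup>* l l'" and "basic_move\<^sup>*\<^sup>* r r'"
  shows "basic_move\<^sup>*\<^sup>* (YC l r) (YC l' r')"
proof -
  have "basic_move\<^sup>*\<^sup>* (YC l r) (YC l' r)"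
    using assms(1) by induction (auto intro: rtranclp.rtrancl_into_rtrancl basic_move.YL)
  also have "basic_move\<^sup>*\<^sup>* (YC l' r) (YC l' r')"
    using assms(2) by induction (auto intro: rtranclp.rtrancl_into_rtrancl basic_move.YR)
  finally show ?thesis .
qed

lemma basic_moves_to_root_caret:
  "((p + tau ^ (k + 2), y) \<in> leaf_intervals t p k \<longrightarrow> (\<exists>l r. basic_move\<^sup>*\<^sup>* t (XC l r))) \<and>
   ((p + tau ^ (k + 1), y) \<in> leaf_intervals t p k \<longrightarrow> (\<exists>l r. basic_move\<^sup>*\<^sup>* t (YC l r)))"
proof (induction t arbitrary: p k y)
  case Leaf
  then show ?case using tau_pos by simp
next
  case (XC l r)
  have "\<exists>l' r'. basic_move\<^sup>*\<^sup>* (XC l r) (YC l' r')"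
    if start: "(p + tau ^ (k + 1), y) \<in> leaf_intervals (XC l r) p k"
  proof -
    have "(p + tau ^ (k + 1), y) \<notin> leaf_intervals l p (k + 2)"
      using leaf_interval_start_bounds[of "p + tau ^ (k + 1)" y l p "k + 2"] tau_power_less[of k]
      by linarith
    with start have "(p + tau ^ (k + 1), y) \<in> leaf_intervals r (p + tau ^ (k + 2)) (k + 1)"
      by simp
    moreover have "p + tau ^ (k + 2) + tau ^ (k + 1 + 2) = p + tau ^ (k + 1)"
      using tau_power_recurrence[of "k + 1"] by simp
    ultimately have "(p + tau ^ (k + 2) + tau ^ (k + 1 + 2), y)
        \<in> leaf_intervals r (p + tau ^ (k + 2)) (k + 1)"
      by (simp only:)
    then obtain B C where "basic_move\<^sup>*\<^sup>* r (XC B C)"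
      using XC.IH(2) by blast
    then have "basic_move\<^sup>*\<^sup>* (XC l r) (XC l (XC B C))"
      by (simp add: basic_moves_XC)
    also have "basic_move (XC l (XC B C)) (YC (YC l B) C)"
      by (rule basic_move.xy)
    finally show ?thesis by blast
  qed
  then show ?case by blast
next
  case (YC l r)
  have "\<exists>l' r'. basic_move\<^sup>*\<^sup>* (YC l r) (XC l' r')"
    if start: "(p + tau ^ (k + 2), y) \<in> leaf_intervals (YC l r) p k"
  proof -
    have "(p + tau ^ (k + 2), y) \<notin> leaf_intervals r (p + tau ^ (k + 1)) (k + 2)"
      using leaf_interval_start_bounds[of "p + tau ^ (k + 2)" y r "p + tau ^ (k + 1)" "k + 2"]
        tau_power_less[of k] by linarith
    with start have "(p + tau ^ (k + 1 + 1), y) \<in> leaf_intervals l p (k + 1)"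
      by simp
    then obtain A B where "basic_move\<^sup>*\<^sup>* l (YC A B)"
      using YC.IH(1) by blast
    then have "basic_move\<^sup>*\<^sup>* (YC l r) (YC (YC A B) r)"
      by (simp add: basic_moves_YC)
    also have "basic_move (YC (YC A B) r) (XC A (XC B r))"
      by (rule basic_move.yx)
    finally show ?thesis by blast
  qed
  then show ?case by blast
qed

lemma leaf_intervals_eq_imp_basic_moves:
  "leaf_intervals T p k = leaf_intervals T' p k \<Longrightarrow> basic_move\<^sup>*\<^sup>* T T'"
proof (induction T' arbitrary: T p k)
  case Leaf
  then have "T = Leaf" by (simp only: leaf_intervals_eq_Leaf_iff)
  then show ?case by simp
next
  case (XC l' r')
  obtain b where "(p + tau ^ (k + 2), b) \<in> leaf_intervals r' (p + tau ^ (k + 2)) (k + 1)"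
    using leaf_interval_at_start by blast
  then have "(p + tau ^ (k + 2), b) \<in> leaf_intervals T p k"
    using XC.prems by simp
  then obtain l r where to_root: "basic_move\<^sup>*\<^sup>* T (XC l r)"
    using basic_moves_to_root_caret by blast
  then have "leaf_intervals (XC l r) p k = leaf_intervals (XC l' r') p k"
    using XC.prems basic_moves_leaf_intervals by metis
  then have "basic_move\<^sup>*\<^sup>* l l'" and "basic_move\<^sup>*\<^sup>* r r'"
    unfolding leaf_intervals_XC_eq_iff using XC.IH by blast+
  with to_root show ?case
    by (meson basic_moves_XC rtranclp_trans)
next
  case (YC l' r')
  obtain b where "(p + tau ^ (k + 1), b) \<in> leaf_intervals r' (p + tau ^ (k + 1)) (k + 2)"
    using leaf_interval_at_start by blast
  then have "(p + tau ^ (k + 1), b) \<in> leaf_intervals T p k"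
    using YC.prems by simp
  then obtain l r where to_root: "basic_move\<^sup>*\<^sup>* T (YC l r)"
    using basic_moves_to_root_caret by blast
  then have "leaf_intervals (YC l r) p k = leaf_intervals (YC l' r') p k"
    using YC.prems basic_moves_leaf_intervals by metis
  then have "basic_move\<^sup>*\<^sup>* l l'" and "basic_move\<^sup>*\<^sup>* r r'"
    unfolding leaf_intervals_YC_eq_iff using YC.IH by blast+
  with to_root show ?case
    by (meson basic_moves_YC rtranclp_trans)
qed

theorem mainTheorem15:
  fixes T T' :: ftree
  assumes "subdivision T = subdivision T'"
  shows "basic_move\<^sup>*\<^sup>* T T'"
  using assms unfolding subdivision_def by (rule leaf_intervals_eq_imp_basic_moves)

end
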